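(* Let $p$ be any of the following patterns, or any pattern in the same symmetry class as one of them: $(123,\{0\},\{0,1,2\})$, $(123,\{0\},\{0,1,3\})$, $(123,\{0\},\{0,2,3\})$, $(123,\{0\},\{1,2,3\})$, $(123,\{1\},\{0,1,2\})$, $(123,\{1\},\{0,1,3\})$, $(123,\{1\},\{0,2,3\})$, $(123,\{1\},\{1,2,3\})$, $(132,\{0\},\{0,1,2\})$, $(132,\{0\},\{0,1,3\})$, $(132,\{0\},\{0,2,3\})$, $(132,\{0\},\{1,2,3\})$, $(132,\{1\},\{0,1,2\})$, $(132,\{1\},\{0,1,3\})$, $(132,\{1\},\{0,2,3\})$, $(132,\{1\},\{1,2,3\})$, $(132,\{2\},\{0,1,2\})$, $(132,\{2\},\{0,1,3\})$, $(132,\{2\},\{0,2,3\})$, $(132,\{2\},\{1,2,3\})$, $(132,\{0,1,2\},\{3\})$, $(132,\{3\},\{0,1,3\})$, $(132,\{3\},\{0,2,3\})$, $(132,\{3\},\{1,2,3\})$. Then for all $n\ge3$, $a_n(p)=n!-\frac{(n-1)!}{2}$.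
   Context: For $n\ge1$, $\mathcal S_n$ is the set of permutations $\pi=\pi_1\cdots\pi_n$ of $[n]$. A bi-vincular pattern of length $k$ is a triple $p=(\sigma,X,Y)$ with $\sigma\in\mathcal S_k$ and $X,Y\subseteq\{0,1,\dots,k\}$. A permutation $\pi\in\mathcal S_n$ contains $p$ if there are indices $1\le i_1<\dots<i_k\le n$ such that $(\pi_{i_1},\dots,\pi_{i_k})$ is order-isomorphic to $\sigma$ and, letting $j_1<\dots<j_k$ be the values $\pi_{i_1},\dots,\pi_{i_k}$ sorted increasingly and setting $i_0=j_0=0$, $i_{k+1}=j_{k+1}=n+1$, one has $i_{x+1}=i_x+1$ for all $x\in X$ and $j_{y+1}=j_y+1$ for all $y\in Y$. Otherwise $\pi$ avoids $p$; $a_n(p)$ is the number of $\pi\in\mathcal S_n$ avoiding $p$. Symmetries: $p^{i}=(\sigma^{-1},Y,X)$, $p^{r}=(\sigma^{r},\{k-x:x\in X\},Y)$, $p^{c}=(\sigma^{c},X,\{k-y:y\in Y\})$ with $\sigma^r_j=\sigma_{k+1-j}$, $\sigma^c_j=k+1-\sigma_j$; the symmetry class of $p$ consists of all patterns obtained from $p$ by finitely many applications of these maps. *)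

theory Defs
  imports Main "HOL-Combinatorics.Multiset_Permutations"
begin

text \<open>Permutations of [n] are lists pi with pi_i = pi ! (i - 1) (1-indexed).
A bi-vincular pattern is a triple (sigma, X, Y), sigma a list which is a permutation of [k].\<close>

type_synonym bvpat = "nat list \<times> nat set \<times> nat set"

definition Sn :: "nat \<Rightarrow> nat list set" where
  "Sn n = permutations_of_set {1..n}"

definition contains :: "nat list \<Rightarrow> bvpat \<Rightarrow> bool" where
  "contains \<pi> p = (case p of (\<sigma>, X, Y) \<Rightarrow>
     (let n = length \<pi>; k = length \<sigma> in
      \<exists>i :: nat \<Rightarrow> nat.
        (\<forall>a\<in>{1..k}. 1 \<le> i a \<and> i a \<le> n) \<and>
        (\<forall>a b. 1 \<le> a \<longrightarrow> a < b \<longrightarrow> b \<le> k \<longrightarrow> i a < i b) \<and>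
        (\<forall>a\<in>{1..k}. \<forall>b\<in>{1..k}.
            (\<pi> ! (i a - 1) < \<pi> ! (i b - 1)) \<longleftrightarrow> (\<sigma> ! (a - 1) < \<sigma> ! (b - 1))) \<and>
        (let I = (\<lambda>x. if x = 0 then 0 else if x = k + 1 then n + 1 else i x);
             V = sorted_list_of_set ((\<lambda>a. \<pi> ! (i a - 1)) ` {1..k});
             J = (\<lambda>y. if y = 0 then 0 else if y = k + 1 then n + 1 else V ! (y - 1))
         in (\<forall>x\<in>X. I (x + 1) = I x + 1) \<and> (\<forall>y\<in>Y. J (y + 1) = J y + 1))))"

definition avoid_count :: "nat \<Rightarrow> bvpat \<Rightarrow> nat" where
  "avoid_count n p = card {\<pi> \<in> Sn n. \<not> contains \<pi> p}"

definition inv_list :: "nat list \<Rightarrow> nat list" where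
  "inv_list \<sigma> = map (\<lambda>v. (THE a. 1 \<le> a \<and> a \<le> length \<sigma> \<and> \<sigma> ! (a - 1) = v)) [1..<length \<sigma> + 1]"

definition pat_inv :: "bvpat \<Rightarrow> bvpat" where
  "pat_inv p = (case p of (\<sigma>, X, Y) \<Rightarrow> (inv_list \<sigma>, Y, X))"

definition pat_rev :: "bvpat \<Rightarrow> bvpat" where
  "pat_rev p = (case p of (\<sigma>, X, Y) \<Rightarrow> (rev \<sigma>, (\<lambda>x. length \<sigma> - x) ` X, Y))"

definition pat_comp :: "bvpat \<Rightarrow> bvpat" where
  "pat_comp p = (case p of (\<sigma>, X, Y) \<Rightarrow>
     (map (\<lambda>v. length \<sigma> + 1 - v) \<sigma>, X, (\<lambda>y. length \<sigma> - y) ` Y))"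

inductive_set sym_class :: "bvpat \<Rightarrow> bvpat set" for p :: bvpat where
  refl: "p \<in> sym_class p"
| inv: "q \<in> sym_class p \<Longrightarrow> pat_inv q \<in> sym_class p"
| rev: "q \<in> sym_class p \<Longrightarrow> pat_rev q \<in> sym_class p"
| comp: "q \<in> sym_class p \<Longrightarrow> pat_comp q \<in> sym_class p"

definition base_patterns :: "bvpat set" where
  "base_patterns = {
    ([1,2,3], {0}, {0,1,2}), ([1,2,3], {0}, {0,1,3}), ([1,2,3], {0}, {0,2,3}), ([1,2,3], {0}, {1,2,3}),
    ([1,2,3], {1}, {0,1,2}), ([1,2,3], {1}, {0,1,3}), ([1,2,3], {1}, {0,2,3}), ([1,2,3], {1}, {1,2,3}),
    ([1,3,2], {0}, {0,1,2}), ([1,3,2], {0}, {0,1,3}), ([1,3,2], {0}, {0,2,3}), ([1,3,2], {0}, {1,2,3}),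
    ([1,3,2], {1}, {0,1,2}), ([1,3,2], {1}, {0,1,3}), ([1,3,2], {1}, {0,2,3}), ([1,3,2], {1}, {1,2,3}),
    ([1,3,2], {2}, {0,1,2}), ([1,3,2], {2}, {0,1,3}), ([1,3,2], {2}, {0,2,3}), ([1,3,2], {2}, {1,2,3}),
    ([1,3,2], {0,1,2}, {3}), ([1,3,2], {3}, {0,1,3}), ([1,3,2], {3}, {0,2,3}), ([1,3,2], {3}, {1,2,3})}"

end

theory Submission
  imports Defs
begin

text \<open>
  If Y consists of three of the four gaps 0, ..., 3 of a pattern of length three, the gap
  conditions on the values 0 < a < b < c < n + 1 of an occurrence put all the slack n - 3 into
  the remaining gap, so these values are forced. Containing (\<sigma>, {x}, Y) then means that three
  fixed numbers appear in the order prescribed by \<sigma> with the x-th of the four gaps between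
  positions empty. Deleting the first of them (x = 0), or the second when it directly follows the
  first (x = 1), is a bijection onto those permutations of n - 1 letters in which the other two
  appear in a fixed order, that is, onto half of them; the cases x = 2, 3 reduce to x = 1, 0 by
  reversal. Inverting permutations turns the patterns (\<sigma>, X, {x}) with three gaps in X into
  such patterns, and reversal and complement preserve both families.
\<close>

section \<open>Three marked entries of a random permutation\<close>

definition precedes :: "'a \<Rightarrow> 'a \<Rightarrow> 'a list \<Rightarrow> bool" where
  "precedes a b xs \<longleftrightarrow> (\<exists>p q r. xs = p @ a # q @ b # r)"

lemma precedes_map: "precedes a b xs \<Longrightarrow> precedes (f a) (f b) (map f xs)"
  unfolding precedes_def by force

lemma precedes_total:
  assumes "a \<in> set xs" "b \<in> set xs" "a \<noteq> b"
  shows "precedes a b xs \<or> precedes b a xs"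
proof -
  obtain p t where xs: "xs = p @ a # t" using assms(1) by (meson split_list)
  show ?thesis
  proof (cases "b \<in> set p")
    case True
    then obtain p1 p2 where "p = p1 @ b # p2" by (meson split_list)
    then show ?thesis using xs unfolding precedes_def by force
  next
    case False
    then have "b \<in> set t" using assms xs by auto
    then obtain t1 t2 where "t = t1 @ b # t2" by (meson split_list)
    then show ?thesis using xs unfolding precedes_def by force
  qed
qed

lemma precedes_asym:
  assumes "distinct xs" "precedes a b xs"
  shows "\<not> precedes b a xs"
proof
  assume "precedes b a xs"
  then obtain p' q' r' where xs': "xs = p' @ b # q' @ a # r'" unfolding precedes_def by blast
  obtain p q r where xs: "xs = p @ a # q @ b # r" using assms(2) unfolding precedes_def by blast
  have "a \<notin> set p" "a \<notin> set (q @ b # r)" using assms(1) xs by auto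
  then have "p = p' @ b # q'"
    using xs xs' append_Cons_eq_iff[of a p "q @ b # r" "p' @ b # q'" r'] by simp
  then show False using assms(1) xs by auto
qed

lemma card_precedes:
  assumes "finite A" "a \<in> A" "b \<in> A" "a \<noteq> b"
  shows "2 * card {xs \<in> permutations_of_set A. precedes a b xs} = fact (card A)"
proof -
  let ?P = "permutations_of_set A"
  let ?B = "\<lambda>a b. {xs \<in> ?P. precedes a b xs}"
  let ?f = "map (transpose a b)"
  have perm: "?f xs \<in> ?P" if "xs \<in> ?P" for xs
    using that permutations_of_set_image_permutes[OF permutes_swap_id[OF assms(2,3)]] by blast
  have inv: "?f (?f xs) = xs" for xs
    by (simp add: comp_def)
  have swap: "precedes a b (?f xs) \<longleftrightarrow> precedes b a xs" for xs
    using precedes_map[of _ _ _ "transpose a b"] inv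
    by (metis transpose_apply_first transpose_apply_second)
  have "bij_betw ?f (?B b a) (?B a b)"
    by (rule bij_betw_byWitness[where f' = ?f]) (auto simp: perm swap inv swap[of "?f _", unfolded inv])
  then have "card (?B b a) = card (?B a b)" by (rule bij_betw_same_card)
  moreover have "?P = ?B a b \<union> ?B b a"
    using precedes_total[of a _ b] assms(2-4) by (auto simp: permutations_of_set_def)
  moreover have "?B a b \<inter> ?B b a = {}"
    using precedes_asym by (fastforce simp: permutations_of_set_def)
  ultimately show ?thesis
    using assms(1) card_Un_disjoint[of "?B a b" "?B b a"] by simp
qed

lemma card_permutations_of_set_rev:
  "card {xs \<in> permutations_of_set A. P (rev xs)} = card {xs \<in> permutations_of_set A. P xs}"
proof -
  have "xs \<in> permutations_of_set A \<longleftrightarrow> rev xs \<in> permutations_of_set A" for xs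
    by (simp add: permutations_of_set_def)
  then have "bij_betw rev {xs \<in> permutations_of_set A. P (rev xs)} {xs \<in> permutations_of_set A. P xs}"
    by (intro bij_betw_byWitness[where f' = rev]) auto
  then show ?thesis by (rule bij_betw_same_card)
qed

lemma card_Cons_precedes:
  assumes "finite A" "u \<in> A" "v \<in> A" "w \<in> A" "u \<noteq> v" "u \<noteq> w" "v \<noteq> w"
  shows "2 * card {xs \<in> permutations_of_set A. \<exists>ys. xs = u # ys \<and> precedes v w ys}
         = fact (card A - 1)"
proof -
  have Cons: "u # ys \<in> permutations_of_set A \<longleftrightarrow> ys \<in> permutations_of_set (A - {u})" for ys
    using assms(2) by (auto simp: permutations_of_set_def)
  have "bij_betw tl {xs \<in> permutations_of_set A. \<exists>ys. xs = u # ys \<and> precedes v w ys}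
                   {ys \<in> permutations_of_set (A - {u}). precedes v w ys}"
    by (rule bij_betw_byWitness[where f' = "(#) u"]) (auto simp: Cons)
  then show ?thesis
    using bij_betw_same_card card_precedes[of "A - {u}" v w] assms by fastforce
qed

primrec insert_after :: "'a \<Rightarrow> 'a \<Rightarrow> 'a list \<Rightarrow> 'a list" where
  "insert_after u v [] = []"
| "insert_after u v (y # ys) = (if y = u then u # v # ys else y # insert_after u v ys)"

lemma insert_after_append: "u \<notin> set p \<Longrightarrow> insert_after u v (p @ u # t) = p @ u # v # t"
  by (induction p) auto

lemma remove1_insert_after: "v \<notin> set ys \<Longrightarrow> remove1 v (insert_after u v ys) = ys"
  by (induction ys) auto

lemma card_adjacent_precedes:
  assumes "finite A" "u \<in> A" "v \<in> A" "w \<in> A" "u \<noteq> v" "u \<noteq> w" "v \<noteq> w"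
  shows "2 * card {xs \<in> permutations_of_set A. \<exists>p r s. xs = p @ u # v # r @ w # s}
         = fact (card A - 1)"
proof -
  let ?C = "{xs \<in> permutations_of_set A. \<exists>p r s. xs = p @ u # v # r @ w # s}"
  let ?B = "{ys \<in> permutations_of_set (A - {v}). precedes u w ys}"
  have remove: "remove1 v (p @ u # v # t) = p @ u # t"
    and insert: "insert_after u v (p @ u # t) = p @ u # v # t"
    if "distinct (p @ u # v # t)" for p t
    using that assms(5) by (auto simp: remove1_append insert_after_append)
  have "remove1 v ` ?C \<subseteq> ?B"
  proof
    fix ys assume "ys \<in> remove1 v ` ?C"
    then obtain p r s where xs: "p @ u # v # r @ w # s \<in> permutations_of_set A"
      and ys: "ys = remove1 v (p @ u # v # r @ w # s)" by blast
    have "ys \<in> permutations_of_set (A - {v})"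
      using xs unfolding ys permutations_of_set_def by (simp add: set_remove1_eq)
    moreover have "ys = p @ u # r @ w # s"
      using xs remove[of p "r @ w # s"] unfolding ys permutations_of_set_def by simp
    ultimately show "ys \<in> ?B" unfolding precedes_def by blast
  qed
  moreover have "insert_after u v ` ?B \<subseteq> ?C"
  proof
    fix xs assume "xs \<in> insert_after u v ` ?B"
    then obtain p q r where ys: "p @ u # q @ w # r \<in> permutations_of_set (A - {v})"
      and xs: "xs = insert_after u v (p @ u # q @ w # r)" unfolding precedes_def by blast
    have "xs = p @ u # v # q @ w # r"
      using ys unfolding xs permutations_of_set_def by (simp add: insert_after_append)
    moreover have "xs \<in> permutations_of_set A"
      using ys assms(3) unfolding calculation permutations_of_set_def by auto
    ultimately show "xs \<in> ?C" by blast
  qed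
  moreover have "insert_after u v (remove1 v xs) = xs" if "xs \<in> ?C" for xs
    using that remove insert by (auto simp: permutations_of_set_def)
  moreover have "remove1 v (insert_after u v ys) = ys" if "ys \<in> ?B" for ys
    using that by (simp add: remove1_insert_after permutations_of_set_def)
  ultimately have "bij_betw (remove1 v) ?C ?B"
    by (intro bij_betw_byWitness[where f' = "insert_after u v"]) auto
  then show ?thesis
    using bij_betw_same_card card_precedes[of "A - {v}" u w] assms by fastforce
qed

definition occurs3_gap_empty :: "'a \<Rightarrow> 'a \<Rightarrow> 'a \<Rightarrow> nat \<Rightarrow> 'a list \<Rightarrow> bool" where
  "occurs3_gap_empty u v w x xs \<longleftrightarrow> (\<exists>p q r s. xs = p @ u # q @ v # r @ w # s \<and> [p, q, r, s] ! x = [])"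

lemma occurs3_gap_empty_rev:
  assumes "x \<le> 3"
  shows "occurs3_gap_empty u v w x (rev xs) \<longleftrightarrow> occurs3_gap_empty w v u (3 - x) xs"
proof -
  have x: "x = 0 \<or> x = 1 \<or> x = 2 \<or> x = 3" using assms by auto
  have split_rev: "rev xs = p @ u # q @ v # r @ w # s \<longleftrightarrow> xs = rev s @ w # rev r @ v # rev q @ u # rev p"
    for p q r s by (auto simp: rev_swap)
  show ?thesis
  proof
    assume "occurs3_gap_empty u v w x (rev xs)"
    then obtain p q r s where "xs = rev s @ w # rev r @ v # rev q @ u # rev p" "[p, q, r, s] ! x = []"
      unfolding occurs3_gap_empty_def split_rev by blast
    then have "xs = rev s @ w # rev r @ v # rev q @ u # rev p \<and>
        [rev s, rev r, rev q, rev p] ! (3 - x) = []"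
      using x by (elim disjE) auto
    then show "occurs3_gap_empty w v u (3 - x) xs" unfolding occurs3_gap_empty_def by blast
  next
    assume "occurs3_gap_empty w v u (3 - x) xs"
    then obtain p q r s where "xs = p @ w # q @ v # r @ u # s" "[p, q, r, s] ! (3 - x) = []"
      unfolding occurs3_gap_empty_def by blast
    then have "rev xs = rev s @ u # rev r @ v # rev q @ w # rev p \<and>
        [rev s, rev r, rev q, rev p] ! x = []"
      using x by (elim disjE) auto
    then show "occurs3_gap_empty u v w x (rev xs)" unfolding occurs3_gap_empty_def by blast
  qed
qed

lemma card_occurs3_gap_empty:
  assumes "finite A" "u \<in> A" "v \<in> A" "w \<in> A" "u \<noteq> v" "u \<noteq> w" "v \<noteq> w" "x \<le> 3"
  shows "2 * card {xs \<in> permutations_of_set A. occurs3_gap_empty u v w x xs} = fact (card A - 1)"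
proof -
  have head: "2 * card {xs \<in> permutations_of_set A. occurs3_gap_empty a b c 0 xs} = fact (card A - 1)"
    if "a \<in> A" "b \<in> A" "c \<in> A" "a \<noteq> b" "a \<noteq> c" "b \<noteq> c" for a b c
  proof -
    have "occurs3_gap_empty a b c 0 xs \<longleftrightarrow> (\<exists>ys. xs = a # ys \<and> precedes b c ys)" for xs
      unfolding occurs3_gap_empty_def precedes_def by auto
    then show ?thesis using card_Cons_precedes[OF assms(1) that] by simp
  qed
  have adjacent: "2 * card {xs \<in> permutations_of_set A. occurs3_gap_empty a b c 1 xs} = fact (card A - 1)"
    if "a \<in> A" "b \<in> A" "c \<in> A" "a \<noteq> b" "a \<noteq> c" "b \<noteq> c" for a b c
  proof -
    have "occurs3_gap_empty a b c 1 xs \<longleftrightarrow> (\<exists>p r s. xs = p @ a # b # r @ c # s)" for xs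
      unfolding occurs3_gap_empty_def by auto
    then show ?thesis using card_adjacent_precedes[OF assms(1) that] by simp
  qed
  have reversed: "card {xs \<in> permutations_of_set A. occurs3_gap_empty u v w x xs}
      = card {xs \<in> permutations_of_set A. occurs3_gap_empty w v u (3 - x) xs}"
    using card_permutations_of_set_rev[of A "occurs3_gap_empty u v w x"]
    unfolding occurs3_gap_empty_rev[OF assms(8)] by simp
  have "x = 0 \<or> x = 1 \<or> x = 2 \<or> x = 3" using assms(8) by auto
  then show ?thesis
  proof (elim disjE)
    assume "x = 2"
    then show ?thesis using reversed adjacent[of w v u] assms(2-7) by simp
  next
    assume "x = 3"
    then show ?thesis using reversed head[of w v u] assms(2-7) by simp
  qed (use head[of u v w] adjacent[of u v w] assms(2-7) in simp_all)
qed

section \<open>Occurrences of bi-vincular patterns\<close>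

text \<open>The list 0, xs, n + 1 read from index 0; it plays the role of I and J in the definition
  of contains.\<close>

definition framed :: "nat \<Rightarrow> nat list \<Rightarrow> nat \<Rightarrow> nat" where
  "framed n xs y = (if y = 0 then 0 else if y = Suc (length xs) then Suc n else xs ! (y - 1))"

definition consecutive_at :: "(nat \<Rightarrow> nat) \<Rightarrow> nat set \<Rightarrow> bool" where
  "consecutive_at f S \<longleftrightarrow> (\<forall>s\<in>S. f (Suc s) = Suc (f s))"

definition order_iso :: "nat list \<Rightarrow> nat list \<Rightarrow> bool" where
  "order_iso xs ys \<longleftrightarrow> length xs = length ys \<and>
     (\<forall>s<length xs. \<forall>t<length xs. xs ! s < xs ! t \<longleftrightarrow> ys ! s < ys ! t)"

definition occurrence :: "nat list \<Rightarrow> nat list \<Rightarrow> nat set \<Rightarrow> nat set \<Rightarrow> nat list \<Rightarrow> bool" where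
  "occurrence \<pi> \<sigma> X Y is \<longleftrightarrow>
     (let vs = map (\<lambda>i. \<pi> ! (i - 1)) is in
      sorted_wrt (<) is \<and> set is \<subseteq> {1..length \<pi>} \<and> order_iso vs \<sigma> \<and>
      consecutive_at (framed (length \<pi>) is) X \<and>
      consecutive_at (framed (length \<pi>) (sorted_list_of_set (set vs))) Y)"

lemma order_iso_distinct: "order_iso xs ys \<Longrightarrow> distinct ys \<Longrightarrow> distinct xs"
  unfolding order_iso_def distinct_conv_nth by (metis less_irrefl linorder_neqE_nat)

lemma contains_iff_occurrence:
  assumes "distinct \<sigma>" "X \<subseteq> {..length \<sigma>}" "Y \<subseteq> {..length \<sigma>}"
  shows "contains \<pi> (\<sigma>, X, Y) \<longleftrightarrow> (\<exists>is. occurrence \<pi> \<sigma> X Y is)"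
proof -
  note upt_Suc [simp del]
  let ?k = "length \<sigma>" and ?n = "length \<pi>"
  let ?I = "\<lambda>i x. if x = 0 then 0 else if x = ?k + 1 then ?n + 1 else i x"
  let ?J = "\<lambda>V y. if y = 0 then 0 else if y = ?k + 1 then ?n + 1 else V ! (y - 1)"
  have consecutive_cong: "(\<forall>x\<in>S. f (x + 1) = f x + 1) \<longleftrightarrow> consecutive_at g S"
    if "S \<subseteq> {..?k}" "\<And>y. y \<le> Suc ?k \<Longrightarrow> f y = g y" for S f g
    using that unfolding consecutive_at_def by (auto simp: subset_iff)
  have body_iff: "((\<forall>a\<in>{1..?k}. 1 \<le> i a \<and> i a \<le> ?n) \<and>
        (\<forall>a b. 1 \<le> a \<longrightarrow> a < b \<longrightarrow> b \<le> ?k \<longrightarrow> i a < i b) \<and>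
        (\<forall>a\<in>{1..?k}. \<forall>b\<in>{1..?k}. (\<pi> ! (i a - 1) < \<pi> ! (i b - 1)) \<longleftrightarrow> (\<sigma> ! (a - 1) < \<sigma> ! (b - 1))) \<and>
        (\<forall>x\<in>X. ?I i (x + 1) = ?I i x + 1) \<and>
        (\<forall>y\<in>Y. ?J (sorted_list_of_set ((\<lambda>a. \<pi> ! (i a - 1)) ` {1..?k})) (y + 1)
                = ?J (sorted_list_of_set ((\<lambda>a. \<pi> ! (i a - 1)) ` {1..?k})) y + 1))
      \<longleftrightarrow> occurrence \<pi> \<sigma> X Y (map i [1..<Suc ?k])" for i
  proof -
    let ?is = "map i [1..<Suc ?k]"
    let ?vs = "map (\<lambda>i. \<pi> ! (i - 1)) ?is"
    have nth_is: "?is ! j = i (Suc j)" if "j < ?k" for j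
      using that by simp
    have set_is: "set ?is = i ` {1..?k}"
      by (simp add: atLeastLessThanSuc_atLeastAtMost)
    have range: "(\<forall>a\<in>{1..?k}. 1 \<le> i a \<and> i a \<le> ?n) \<longleftrightarrow> set ?is \<subseteq> {1..?n}"
      unfolding set_is by auto
    have sorted: "(\<forall>a b. 1 \<le> a \<longrightarrow> a < b \<longrightarrow> b \<le> ?k \<longrightarrow> i a < i b) \<longleftrightarrow> sorted_wrt (<) ?is"
    proof -
      have "sorted_wrt (<) ?is \<longleftrightarrow> (\<forall>j l. j < l \<longrightarrow> l < ?k \<longrightarrow> i (Suc j) < i (Suc l))"
        unfolding sorted_wrt_iff_nth_less by (auto simp: nth_is)
      also have "\<dots> \<longleftrightarrow> (\<forall>a b. 1 \<le> a \<longrightarrow> a < b \<longrightarrow> b \<le> ?k \<longrightarrow> i a < i b)"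
      proof (intro iffI allI impI)
        fix a b :: nat assume mono: "\<forall>j l. j < l \<longrightarrow> l < ?k \<longrightarrow> i (Suc j) < i (Suc l)"
          and "1 \<le> a" "a < b" "b \<le> ?k"
        then show "i a < i b" using mono[rule_format, of "a - 1" "b - 1"] by simp
      qed auto
      finally show ?thesis by simp
    qed
    have iso: "(\<forall>a\<in>{1..?k}. \<forall>b\<in>{1..?k}. (\<pi> ! (i a - 1) < \<pi> ! (i b - 1)) \<longleftrightarrow> (\<sigma> ! (a - 1) < \<sigma> ! (b - 1)))
        \<longleftrightarrow> order_iso ?vs \<sigma>"
    proof
      assume "\<forall>a\<in>{1..?k}. \<forall>b\<in>{1..?k}. (\<pi> ! (i a - 1) < \<pi> ! (i b - 1)) \<longleftrightarrow> (\<sigma> ! (a - 1) < \<sigma> ! (b - 1))"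
      then show "order_iso ?vs \<sigma>"
        unfolding order_iso_def by (auto simp: nth_is)
    next
      assume "order_iso ?vs \<sigma>"
      then have "\<forall>s<?k. \<forall>t<?k. \<pi> ! (i (Suc s) - 1) < \<pi> ! (i (Suc t) - 1) \<longleftrightarrow> \<sigma> ! s < \<sigma> ! t"
        unfolding order_iso_def by (auto simp: nth_is)
      then show "\<forall>a\<in>{1..?k}. \<forall>b\<in>{1..?k}. (\<pi> ! (i a - 1) < \<pi> ! (i b - 1)) \<longleftrightarrow> (\<sigma> ! (a - 1) < \<sigma> ! (b - 1))"
        by (metis One_nat_def Suc_diff_1 Suc_le_lessD atLeastAtMost_iff less_Suc_eq_le)
    qed
    have value_set: "(\<lambda>a. \<pi> ! (i a - 1)) ` {1..?k} = set ?vs"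
      unfolding set_map[of "\<lambda>i. \<pi> ! (i - 1)" ?is] set_is image_image ..
    have I: "?I i y = framed ?n ?is y" if "y \<le> Suc ?k" for y
    proof (cases "y = 0 \<or> y = Suc ?k")
      case False
      then have "y - 1 < ?k" using that by auto
      then show ?thesis using False nth_is[of "y - 1"] by (simp add: framed_def)
    qed (auto simp: framed_def)
    have J: "?J (sorted_list_of_set (set ?vs)) y = framed ?n (sorted_list_of_set (set ?vs)) y"
      if "order_iso ?vs \<sigma>" for y
    proof -
      have "distinct ?vs" using order_iso_distinct[OF that assms(1)] .
      then have "length (sorted_list_of_set (set ?vs)) = length ?vs"
        by (simp only: length_sorted_list_of_set distinct_card)
      then show ?thesis by (simp add: framed_def)
    qed
    show ?thesis
      unfolding occurrence_def Let_def value_set range sorted iso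
      using consecutive_cong[OF assms(2), of "?I i" "framed ?n ?is"]
        consecutive_cong[OF assms(3), of "?J (sorted_list_of_set (set ?vs))"
          "framed ?n (sorted_list_of_set (set ?vs))"]
        I J by blast
  qed
  have "contains \<pi> (\<sigma>, X, Y) \<longleftrightarrow> (\<exists>i. occurrence \<pi> \<sigma> X Y (map i [1..<Suc ?k]))"
    unfolding contains_def prod.case Let_def body_iff by simp
  also have "\<dots> \<longleftrightarrow> (\<exists>is. occurrence \<pi> \<sigma> X Y is)"
  proof
    assume "\<exists>is. occurrence \<pi> \<sigma> X Y is"
    then obtain "is" where occ: "occurrence \<pi> \<sigma> X Y is" by blast
    then have "length is = ?k" unfolding occurrence_def order_iso_def Let_def by simp
    then have "map (\<lambda>a. is ! (a - 1)) [1..<Suc ?k] = is" by (intro nth_equalityI) auto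
    then show "\<exists>i. occurrence \<pi> \<sigma> X Y (map i [1..<Suc ?k])" using occ by metis
  qed blast
  finally show ?thesis .
qed

lemma Sn_length: "\<pi> \<in> Sn n \<Longrightarrow> length \<pi> = n"
  by (simp add: Sn_def length_finite_permutations_of_set)

lemma Sn_distinct: "\<pi> \<in> Sn n \<Longrightarrow> distinct \<pi>"
  by (simp add: Sn_def permutations_of_set_def)

lemma Sn_nth:
  assumes "\<pi> \<in> Sn n" "1 \<le> i" "i \<le> n"
  shows "\<pi> ! (i - 1) \<in> {1..n}"
proof -
  have "length \<pi> = n" "set \<pi> = {1..n}"
    using assms(1) Sn_length by (auto simp: Sn_def permutations_of_set_def)
  then show ?thesis using assms(2,3) nth_mem[of "i - 1" \<pi>] by auto
qed

lemma Sn_3: "Sn 3 = {[1,2,3], [1,3,2], [2,1,3], [2,3,1], [3,1,2], [3,2,1]}"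
proof -
  have "{1..3::nat} = {1, 2, 3}" by auto
  then show ?thesis unfolding Sn_def
    by (subst permutations_of_set_nonempty) (auto simp: insert_Diff_if permutations_of_set_doubleton)
qed

text \<open>The values of an occurrence of \<sigma> whose sorted list of values is S.\<close>

definition relabel :: "nat list \<Rightarrow> nat list \<Rightarrow> nat list" where
  "relabel S \<sigma> = map (\<lambda>r. S ! (r - 1)) \<sigma>"

lemma set_relabel:
  assumes "\<sigma> \<in> Sn (length S)"
  shows "set (relabel S \<sigma>) = set S"
proof -
  have "set \<sigma> = {1..length S}" using assms by (simp add: Sn_def permutations_of_set_def)
  then have "set (relabel S \<sigma>) = (\<lambda>r. S ! r) ` {..<length S}"
    unfolding relabel_def set_map by (force simp: image_iff)
  also have "\<dots> = set S" by (auto simp: in_set_conv_nth)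
  finally show ?thesis .
qed

lemma sorted_list_of_set_relabel:
  assumes "\<sigma> \<in> Sn (length S)" "sorted_wrt (<) S"
  shows "sorted_list_of_set (set (relabel S \<sigma>)) = S"
  using assms by (simp add: set_relabel strict_sorted_iff sorted_list_of_set.idem_if_sorted_distinct)

lemma order_iso_relabel:
  assumes "\<sigma> \<in> Sn (length S)" "sorted_wrt (<) S"
  shows "order_iso (relabel S \<sigma>) \<sigma>"
proof -
  have "S ! (\<sigma> ! s - 1) < S ! (\<sigma> ! t - 1) \<longleftrightarrow> \<sigma> ! s < \<sigma> ! t"
    if "s < length \<sigma>" "t < length \<sigma>" for s t
  proof -
    have "\<sigma> ! s \<in> {1..length S}" "\<sigma> ! t \<in> {1..length S}"
      using assms(1) that nth_mem by (auto simp: Sn_def permutations_of_set_def)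
    moreover have "S ! i < S ! j \<longleftrightarrow> i < j" if "i < length S" "j < length S" for i j
      using assms(2) that by (metis sorted_wrt_iff_nth_less less_asym not_less_iff_gr_or_eq)
    ultimately show ?thesis by auto
  qed
  then show ?thesis unfolding order_iso_def relabel_def by simp
qed

lemma order_iso_Sn3_imp_relabel:
  assumes "\<sigma> \<in> Sn 3" "order_iso vs \<sigma>"
  shows "\<exists>a b c. a < b \<and> b < c \<and> vs = relabel [a, b, c] \<sigma>"
proof -
  obtain v1 v2 v3 where vs: "vs = [v1, v2, v3]"
    using assms unfolding Sn_3 order_iso_def by (auto simp: numeral_3_eq_3 length_Suc_conv)
  have "\<forall>s<3. \<forall>t<3. vs ! s < vs ! t \<longleftrightarrow> \<sigma> ! s < \<sigma> ! t"
    using assms(2) unfolding order_iso_def vs by simp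
  then show ?thesis
    using assms(1) unfolding Sn_3 vs relabel_def
    by (auto simp: numeral_3_eq_3 All_less_Suc)
qed

lemma contains_Sn3_iff:
  assumes "\<sigma> \<in> Sn 3" "X \<subseteq> {..3}" "Y \<subseteq> {..3}"
  shows "contains \<pi> (\<sigma>, X, Y) \<longleftrightarrow>
    (\<exists>i1 i2 i3. 1 \<le> i1 \<and> i1 < i2 \<and> i2 < i3 \<and> i3 \<le> length \<pi> \<and>
       consecutive_at (framed (length \<pi>) [i1, i2, i3]) X \<and>
       (\<exists>a b c. a < b \<and> b < c \<and> map (\<lambda>i. \<pi> ! (i - 1)) [i1, i2, i3] = relabel [a, b, c] \<sigma> \<and>
          consecutive_at (framed (length \<pi>) [a, b, c]) Y))"
    (is "_ \<longleftrightarrow> (\<exists>i1 i2 i3. ?occ i1 i2 i3)")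
proof -
  note \<sigma> = Sn_length[OF assms(1)] Sn_distinct[OF assms(1)]
  have "contains \<pi> (\<sigma>, X, Y) \<longleftrightarrow> (\<exists>is. occurrence \<pi> \<sigma> X Y is)"
    using contains_iff_occurrence[of \<sigma> X Y] \<sigma> assms(2,3) by simp
  also have "\<dots> \<longleftrightarrow> (\<exists>i1 i2 i3. occurrence \<pi> \<sigma> X Y [i1, i2, i3])"
  proof
    assume "\<exists>is. occurrence \<pi> \<sigma> X Y is"
    then obtain "is" where "occurrence \<pi> \<sigma> X Y is" by blast
    moreover from this have "length is = 3" unfolding occurrence_def order_iso_def Let_def \<sigma> by simp
    ultimately show "\<exists>i1 i2 i3. occurrence \<pi> \<sigma> X Y [i1, i2, i3]"
      by (auto simp: numeral_3_eq_3 length_Suc_conv)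
  qed blast
  also have "\<dots> \<longleftrightarrow> (\<exists>i1 i2 i3. ?occ i1 i2 i3)"
  proof (intro ex_cong1)
    fix i1 i2 i3
    let ?vs = "map (\<lambda>i. \<pi> ! (i - 1)) [i1, i2, i3]"
    let ?gaps = "\<lambda>S. consecutive_at (framed (length \<pi>) S) Y"
    have \<sigma>_len: "\<sigma> \<in> Sn (length [a, b, c])" for a b c :: nat
      using assms(1) by (simp add: numeral_3_eq_3)
    have "order_iso ?vs \<sigma> \<and> ?gaps (sorted_list_of_set (set ?vs)) \<longleftrightarrow>
        (\<exists>a b c. a < b \<and> b < c \<and> ?vs = relabel [a, b, c] \<sigma> \<and> ?gaps [a, b, c])"
    proof
      assume "order_iso ?vs \<sigma> \<and> ?gaps (sorted_list_of_set (set ?vs))"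
      with order_iso_Sn3_imp_relabel[OF assms(1)] obtain a b c
        where "a < b" "b < c" "?vs = relabel [a, b, c] \<sigma>" "?gaps (sorted_list_of_set (set ?vs))"
        by blast
      then show "\<exists>a b c. a < b \<and> b < c \<and> ?vs = relabel [a, b, c] \<sigma> \<and> ?gaps [a, b, c]"
        using sorted_list_of_set_relabel[OF \<sigma>_len] by auto
    next
      assume "\<exists>a b c. a < b \<and> b < c \<and> ?vs = relabel [a, b, c] \<sigma> \<and> ?gaps [a, b, c]"
      then obtain a b c where "a < b" "b < c" and vs: "?vs = relabel [a, b, c] \<sigma>"
        and "?gaps [a, b, c]" by blast
      moreover from this have "sorted_wrt (<) [a, b, c]" by simp
      ultimately show "order_iso ?vs \<sigma> \<and> ?gaps (sorted_list_of_set (set ?vs))"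
        unfolding vs using sorted_list_of_set_relabel[OF \<sigma>_len] order_iso_relabel[OF \<sigma>_len] by simp
    qed
    then show "occurrence \<pi> \<sigma> X Y [i1, i2, i3] \<longleftrightarrow> ?occ i1 i2 i3"
      unfolding occurrence_def Let_def by auto
  qed
  finally show ?thesis .
qed

lemma split_at_three_positions:
  "(\<exists>i1 i2 i3. 1 \<le> i1 \<and> i1 < i2 \<and> i2 < i3 \<and> i3 \<le> length xs \<and>
       R i1 i2 i3 \<and> map (\<lambda>i. xs ! (i - 1)) [i1, i2, i3] = [u, v, w]) \<longleftrightarrow>
   (\<exists>p q r s. xs = p @ u # q @ v # r @ w # s \<and>
       R (length p + 1) (length p + length q + 2) (length p + length q + length r + 3))"
proof
  assume "\<exists>i1 i2 i3. 1 \<le> i1 \<and> i1 < i2 \<and> i2 < i3 \<and> i3 \<le> length xs \<and>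
       R i1 i2 i3 \<and> map (\<lambda>i. xs ! (i - 1)) [i1, i2, i3] = [u, v, w]"
  then obtain i1 i2 i3 where i: "1 \<le> i1" "i1 < i2" "i2 < i3" "i3 \<le> length xs"
    and uvw: "xs ! (i1 - 1) = u" "xs ! (i2 - 1) = v" "xs ! (i3 - 1) = w" and R: "R i1 i2 i3"
    by auto
  define p where "p = take (i1 - 1) xs"
  define q where "q = take (i2 - i1 - 1) (drop i1 xs)"
  define r where "r = take (i3 - i2 - 1) (drop i2 xs)"
  define s where "s = drop i3 xs"
  have "xs = p @ u # drop i1 xs"
    using id_take_nth_drop[of "i1 - 1" xs] i uvw unfolding p_def by simp
  moreover have "drop i1 xs = q @ v # drop i2 xs"
    using id_take_nth_drop[of "i2 - i1 - 1" "drop i1 xs"] i uvw unfolding q_def by simp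
  moreover have "drop i2 xs = r @ w # s"
    using id_take_nth_drop[of "i3 - i2 - 1" "drop i2 xs"] i uvw unfolding r_def s_def by simp
  ultimately have "xs = p @ u # q @ v # r @ w # s" by simp
  moreover have "length p + 1 = i1" "length p + length q + 2 = i2"
    "length p + length q + length r + 3 = i3"
    unfolding p_def q_def r_def using i by auto
  ultimately show "\<exists>p q r s. xs = p @ u # q @ v # r @ w # s \<and>
       R (length p + 1) (length p + length q + 2) (length p + length q + length r + 3)"
    using R by metis
next
  assume "\<exists>p q r s. xs = p @ u # q @ v # r @ w # s \<and>
       R (length p + 1) (length p + length q + 2) (length p + length q + length r + 3)"
  then obtain p q r s where "xs = p @ u # q @ v # r @ w # s"
    "R (length p + 1) (length p + length q + 2) (length p + length q + length r + 3)" by blast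
  then show "\<exists>i1 i2 i3. 1 \<le> i1 \<and> i1 < i2 \<and> i2 < i3 \<and> i3 \<le> length xs \<and>
       R i1 i2 i3 \<and> map (\<lambda>i. xs ! (i - 1)) [i1, i2, i3] = [u, v, w]"
    by (intro exI[of _ "length p + 1"] exI[of _ "length p + length q + 2"]
        exI[of _ "length p + length q + length r + 3"]) (simp add: nth_append)
qed

lemma consecutive_at_positions_iff_gap_empty:
  assumes "x \<le> 3" "xs = p @ u # q @ v # r @ w # s"
  shows "consecutive_at (framed (length xs)
      [length p + 1, length p + length q + 2, length p + length q + length r + 3]) {x}
    \<longleftrightarrow> [p, q, r, s] ! x = []"
proof -
  have "x = 0 \<or> x = 1 \<or> x = 2 \<or> x = 3" using assms(1) by auto
  then show ?thesis unfolding consecutive_at_def framed_def assms(2) by (elim disjE) auto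
qed

section \<open>Patterns whose values are pinned\<close>

text \<open>The r-th smallest value of an occurrence in which every value gap except gap m is closed.\<close>

definition pinned :: "nat \<Rightarrow> nat \<Rightarrow> nat \<Rightarrow> nat" where
  "pinned m n r = (if r \<le> m then r else n - 3 + r)"

lemma pinned_strict_mono:
  assumes "m \<le> 3" "3 \<le> n"
  shows "1 \<le> pinned m n 1" "pinned m n 1 < pinned m n 2" "pinned m n 2 < pinned m n 3"
    "pinned m n 3 \<le> n"
  using assms unfolding pinned_def by auto

lemma consecutive_at_framed_iff_pinned:
  assumes "m \<le> 3" "1 \<le> a" "a < b" "b < c" "c \<le> n"
  shows "consecutive_at (framed n [a, b, c]) ({..3} - {m}) \<longleftrightarrow>
    [a, b, c] = [pinned m n 1, pinned m n 2, pinned m n 3]"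
proof -
  have gaps: "{..3} - {m} =
      (if m = 0 then {1, 2, 3} else if m = 1 then {0, 2, 3} else if m = 2 then {0, 1, 3} else {0, 1, 2})"
    using assms(1) by auto
  have "m = 0 \<or> m = 1 \<or> m = 2 \<or> m = 3" using assms(1) by auto
  then show ?thesis
    using assms(2-5) unfolding consecutive_at_def framed_def pinned_def
    unfolding gaps by (elim disjE; simp add: numeral_eq_Suc; arith)
qed

lemma contains_pinned_values_iff:
  assumes "\<sigma> \<in> Sn 3" "m \<le> 3" "x \<le> 3" "\<pi> \<in> Sn n" "3 \<le> n"
  shows "contains \<pi> (\<sigma>, {x}, {..3} - {m}) \<longleftrightarrow>
    occurs3_gap_empty (pinned m n (\<sigma> ! 0)) (pinned m n (\<sigma> ! 1)) (pinned m n (\<sigma> ! 2)) x \<pi>"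
proof -
  let ?pins = "[pinned m n 1, pinned m n 2, pinned m n 3]"
  let ?u = "pinned m n (\<sigma> ! 0)" and ?v = "pinned m n (\<sigma> ! 1)" and ?w = "pinned m n (\<sigma> ! 2)"
  let ?R = "\<lambda>i1 i2 i3. consecutive_at (framed (length \<pi>) [i1, i2, i3]) {x}"
  have len: "length \<pi> = n" using Sn_length[OF assms(4)] .
  have pins_relabel: "relabel ?pins \<sigma> = [?u, ?v, ?w]"
    using assms(1) unfolding Sn_3 relabel_def by auto
  have pinned_values: "(\<exists>a b c. a < b \<and> b < c \<and> vs = relabel [a, b, c] \<sigma> \<and>
        consecutive_at (framed n [a, b, c]) ({..3} - {m})) \<longleftrightarrow> vs = [?u, ?v, ?w]"
    if "set vs \<subseteq> {1..n}" for vs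
  proof
    assume "\<exists>a b c. a < b \<and> b < c \<and> vs = relabel [a, b, c] \<sigma> \<and>
        consecutive_at (framed n [a, b, c]) ({..3} - {m})"
    then obtain a b c where abc: "a < b" "b < c" and vs: "vs = relabel [a, b, c] \<sigma>"
      and gaps: "consecutive_at (framed n [a, b, c]) ({..3} - {m})" by blast
    have "\<sigma> \<in> Sn (length [a, b, c])" using assms(1) by (simp add: numeral_3_eq_3)
    then have "set vs = {a, b, c}" unfolding vs by (simp add: set_relabel)
    then have "1 \<le> a" "c \<le> n" using that by auto
    then have "[a, b, c] = ?pins"
      using gaps consecutive_at_framed_iff_pinned[OF assms(2) _ abc] by blast
    then show "vs = [?u, ?v, ?w]" using vs pins_relabel by simp
  next
    assume vs: "vs = [?u, ?v, ?w]"
    have gaps: "consecutive_at (framed n ?pins) ({..3} - {m})"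
      using consecutive_at_framed_iff_pinned[OF assms(2) pinned_strict_mono[OF assms(2,5)]] by simp
    show "\<exists>a b c. a < b \<and> b < c \<and> vs = relabel [a, b, c] \<sigma> \<and>
        consecutive_at (framed n [a, b, c]) ({..3} - {m})"
    proof (rule exI[of _ "pinned m n 1"], rule exI[of _ "pinned m n 2"], rule exI[of _ "pinned m n 3"])
      show "pinned m n 1 < pinned m n 2 \<and> pinned m n 2 < pinned m n 3 \<and> vs = relabel ?pins \<sigma> \<and>
          consecutive_at (framed n ?pins) ({..3} - {m})"
        using vs gaps pins_relabel pinned_strict_mono[OF assms(2,5)] by simp
    qed
  qed
  have in_range: "set (map (\<lambda>i. \<pi> ! (i - 1)) [i1, i2, i3]) \<subseteq> {1..n}"
    if "1 \<le> i1" "i1 < i2" "i2 < i3" "i3 \<le> length \<pi>" for i1 i2 i3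
    using that Sn_nth[OF assms(4)] len by auto
  have X: "{x} \<subseteq> {..3}" and Y: "{..3} - {m} \<subseteq> {..3}" using assms(3) by auto
  have "contains \<pi> (\<sigma>, {x}, {..3} - {m}) \<longleftrightarrow>
      (\<exists>i1 i2 i3. 1 \<le> i1 \<and> i1 < i2 \<and> i2 < i3 \<and> i3 \<le> length \<pi> \<and> ?R i1 i2 i3 \<and>
        (\<exists>a b c. a < b \<and> b < c \<and> map (\<lambda>i. \<pi> ! (i - 1)) [i1, i2, i3] = relabel [a, b, c] \<sigma> \<and>
           consecutive_at (framed n [a, b, c]) ({..3} - {m})))"
    unfolding contains_Sn3_iff[OF assms(1) X Y] len ..
  also have "\<dots> \<longleftrightarrow> (\<exists>i1 i2 i3. 1 \<le> i1 \<and> i1 < i2 \<and> i2 < i3 \<and> i3 \<le> length \<pi> \<and>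
      ?R i1 i2 i3 \<and> map (\<lambda>i. \<pi> ! (i - 1)) [i1, i2, i3] = [?u, ?v, ?w])"
    by (intro ex_cong1 conj_cong HOL.refl pinned_values in_range)
  also have "\<dots> \<longleftrightarrow> occurs3_gap_empty ?u ?v ?w x \<pi>"
    unfolding split_at_three_positions occurs3_gap_empty_def
    by (intro ex_cong1 conj_cong HOL.refl consecutive_at_positions_iff_gap_empty[OF assms(3)])
  finally show ?thesis .
qed

section \<open>Inverse permutations\<close>

lemma inv_list_nth:
  assumes "\<pi> \<in> Sn n" "1 \<le> i" "i \<le> n"
  shows "inv_list \<pi> ! (\<pi> ! (i - 1) - 1) = i"
proof -
  have len: "length \<pi> = n" and "distinct \<pi>"
    using Sn_length Sn_distinct assms(1) by blast+
  have v: "\<pi> ! (i - 1) \<in> {1..n}" using Sn_nth[OF assms] .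
  have "(THE a. 1 \<le> a \<and> a \<le> n \<and> \<pi> ! (a - 1) = \<pi> ! (i - 1)) = i"
  proof (rule the_equality)
    fix a assume a: "1 \<le> a \<and> a \<le> n \<and> \<pi> ! (a - 1) = \<pi> ! (i - 1)"
    then have "a - 1 = i - 1"
      using nth_eq_iff_index_eq[OF \<open>distinct \<pi>\<close>, of "a - 1" "i - 1"] assms(2,3) len by auto
    then show "a = i" using a assms(2) by arith
  qed (use assms(2,3) in simp)
  moreover have "\<pi> ! (i - 1) - 1 < n" and "Suc (\<pi> ! (i - 1) - 1) = \<pi> ! (i - 1)" using v by auto
  ultimately show ?thesis unfolding inv_list_def len by (simp add: nth_map_upt del: upt_Suc)
qed

lemma inv_list_Sn:
  assumes "\<pi> \<in> Sn n"
  shows "inv_list \<pi> \<in> Sn n"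
proof -
  have len: "length (inv_list \<pi>) = n" using Sn_length[OF assms] by (simp add: inv_list_def)
  have "{1..n} \<subseteq> set (inv_list \<pi>)"
  proof
    fix i assume i: "i \<in> {1..n}"
    then have "\<pi> ! (i - 1) - 1 < n" using Sn_nth[OF assms] by fastforce
    then show "i \<in> set (inv_list \<pi>)"
      using inv_list_nth[OF assms] i len by (metis atLeastAtMost_iff nth_mem)
  qed
  moreover have "card (set (inv_list \<pi>)) \<le> n" using card_length len by metis
  ultimately have "set (inv_list \<pi>) = {1..n}" "card (set (inv_list \<pi>)) = n"
    using card_subset_eq[of "set (inv_list \<pi>)" "{1..n}"] card_mono[of "set (inv_list \<pi>)" "{1..n}"]
    by auto
  then show ?thesis using len card_distinct unfolding Sn_def by (metis permutations_of_setI)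
qed

lemma inv_list_inv_list:
  assumes "\<pi> \<in> Sn n"
  shows "inv_list (inv_list \<pi>) = \<pi>"
proof (rule nth_equalityI)
  show "length (inv_list (inv_list \<pi>)) = length \<pi>"
    using Sn_length inv_list_Sn assms by metis
  fix k assume "k < length (inv_list (inv_list \<pi>))"
  then have k: "k < n" using Sn_length inv_list_Sn assms by metis
  then have "inv_list \<pi> ! (\<pi> ! k - 1) = Suc k" using inv_list_nth[OF assms, of "Suc k"] by simp
  moreover have "\<pi> ! k \<in> {1..n}" using Sn_nth[OF assms, of "Suc k"] k by simp
  ultimately show "inv_list (inv_list \<pi>) ! k = \<pi> ! k"
    using inv_list_nth[OF inv_list_Sn[OF assms], of "\<pi> ! k"] by simp
qed

text \<open>An occurrence at positions P with values S becomes one at positions S with values P.\<close>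

lemma contains_inv_list:
  assumes \<sigma>: "\<sigma> \<in> Sn 3" and \<pi>: "\<pi> \<in> Sn n" and X: "X \<subseteq> {..3}" and Y: "Y \<subseteq> {..3}"
    and "contains \<pi> (\<sigma>, X, Y)"
  shows "contains (inv_list \<pi>) (inv_list \<sigma>, Y, X)"
proof -
  let ?\<rho> = "inv_list \<pi>" and ?\<tau> = "inv_list \<sigma>"
  have \<tau>: "?\<tau> \<in> Sn 3" and \<sigma>_\<tau>: "inv_list ?\<tau> = \<sigma>" using inv_list_Sn[OF \<sigma>] inv_list_inv_list[OF \<sigma>] .
  have len: "length \<pi> = n" "length ?\<rho> = n" using Sn_length \<pi> inv_list_Sn by blast+
  obtain i1 i2 i3 a b c where i: "1 \<le> i1" "i1 < i2" "i2 < i3" "i3 \<le> n"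
    and gaps_X: "consecutive_at (framed n [i1, i2, i3]) X" and abc: "a < b" "b < c"
    and vs: "map (\<lambda>i. \<pi> ! (i - 1)) [i1, i2, i3] = relabel [a, b, c] \<sigma>"
    and gaps_Y: "consecutive_at (framed n [a, b, c]) Y"
    using assms(5) unfolding contains_Sn3_iff[OF \<sigma> X Y] len by blast
  let ?P = "[i1, i2, i3]" and ?S = "[a, b, c]"
  have P_range: "1 \<le> ?P ! j \<and> ?P ! j \<le> n" if "j < 3" for j
    using that i by (auto simp: less_Suc_eq numeral_3_eq_3)
  have "set ?S = set (map (\<lambda>i. \<pi> ! (i - 1)) ?P)"
    using set_relabel[of \<sigma> ?S] \<sigma> vs by (simp add: numeral_3_eq_3)
  also have "\<dots> \<subseteq> {1..n}" using Sn_nth[OF \<pi>] i by auto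
  finally have S_range: "1 \<le> a" "c \<le> n" by auto
  have nth_eq: "?\<rho> ! (?S ! k - 1) = ?P ! (?\<tau> ! k - 1)" if k: "k < 3" for k
  proof -
    let ?j = "?\<tau> ! k - 1"
    have "?\<tau> ! k \<in> {1..3}" using Sn_nth[OF \<tau>, of "Suc k"] k by simp
    then have j: "?j < 3" by auto
    have "\<sigma> ! ?j = Suc k" using inv_list_nth[OF \<tau>, of "Suc k"] k \<sigma>_\<tau> by simp
    moreover have "\<pi> ! (?P ! ?j - 1) = relabel ?S \<sigma> ! ?j"
      using arg_cong[OF vs, of "\<lambda>xs. xs ! ?j"] j by (auto simp: less_Suc_eq numeral_3_eq_3)
    ultimately have "\<pi> ! (?P ! ?j - 1) = ?S ! k"
      using j Sn_length[OF \<sigma>] by (simp add: relabel_def)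
    then show ?thesis using inv_list_nth[OF \<pi>] P_range[OF j] by metis
  qed
  have "map (\<lambda>v. ?\<rho> ! (v - 1)) ?S = relabel ?P ?\<tau>"
  proof (rule nth_equalityI)
    show "length (map (\<lambda>v. ?\<rho> ! (v - 1)) ?S) = length (relabel ?P ?\<tau>)"
      using Sn_length[OF \<tau>] by (simp add: relabel_def)
    fix k assume "k < length (map (\<lambda>v. ?\<rho> ! (v - 1)) ?S)"
    then have "k < 3" by simp
    then show "map (\<lambda>v. ?\<rho> ! (v - 1)) ?S ! k = relabel ?P ?\<tau> ! k"
      using nth_eq[of k] Sn_length[OF \<tau>] unfolding relabel_def
      by (subst (1 2) nth_map) simp_all
  qed
  then show ?thesis
    unfolding contains_Sn3_iff[OF \<tau> Y X] len using abc S_range i gaps_X gaps_Y by blast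
qed

lemma card_contains_pat_inv:
  assumes "\<sigma> \<in> Sn 3" "X \<subseteq> {..3}" "Y \<subseteq> {..3}"
  shows "card {\<pi> \<in> Sn n. contains \<pi> (pat_inv (\<sigma>, X, Y))} = card {\<pi> \<in> Sn n. contains \<pi> (\<sigma>, X, Y)}"
proof -
  have "bij_betw inv_list {\<pi> \<in> Sn n. contains \<pi> (\<sigma>, X, Y)} {\<pi> \<in> Sn n. contains \<pi> (inv_list \<sigma>, Y, X)}"
    using contains_inv_list[OF assms(1) _ assms(2,3)]
      contains_inv_list[OF inv_list_Sn[OF assms(1)] _ assms(3,2)] inv_list_inv_list[OF assms(1)]
    by (intro bij_betw_byWitness[where f' = inv_list]) (auto simp: inv_list_inv_list inv_list_Sn)
  then show ?thesis unfolding pat_inv_def by (simp add: bij_betw_same_card)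
qed

definition pinned_value_patterns :: "bvpat set" where
  "pinned_value_patterns = {(\<sigma>, {x}, {..3} - {m}) | \<sigma> x m. \<sigma> \<in> Sn 3 \<and> x \<le> 3 \<and> m \<le> 3}"

definition pinned_position_patterns :: "bvpat set" where
  "pinned_position_patterns = {(\<sigma>, {..3} - {m}, {x}) | \<sigma> x m. \<sigma> \<in> Sn 3 \<and> x \<le> 3 \<and> m \<le> 3}"

definition pinned_patterns :: "bvpat set" where
  "pinned_patterns = pinned_value_patterns \<union> pinned_position_patterns"

lemma pinned_value_patternsI:
  "\<sigma> \<in> Sn 3 \<Longrightarrow> x \<le> 3 \<Longrightarrow> m \<le> 3 \<Longrightarrow> (\<sigma>, {x}, {..3} - {m}) \<in> pinned_value_patterns"
  unfolding pinned_value_patterns_def by blast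

lemma pinned_position_patternsI:
  "\<sigma> \<in> Sn 3 \<Longrightarrow> x \<le> 3 \<Longrightarrow> m \<le> 3 \<Longrightarrow> (\<sigma>, {..3} - {m}, {x}) \<in> pinned_position_patterns"
  unfolding pinned_position_patterns_def by blast

lemma card_contains_pinned_value_pattern:
  assumes "p \<in> pinned_value_patterns" "3 \<le> n"
  shows "2 * card {\<pi> \<in> Sn n. contains \<pi> p} = fact (n - 1)"
proof -
  obtain \<sigma> x m where p: "p = (\<sigma>, {x}, {..3} - {m})" and \<sigma>: "\<sigma> \<in> Sn 3" and "x \<le> 3" "m \<le> 3"
    using assms(1) unfolding pinned_value_patterns_def by blast
  let ?u = "pinned m n (\<sigma> ! 0)" and ?v = "pinned m n (\<sigma> ! 1)" and ?w = "pinned m n (\<sigma> ! 2)"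
  have "?u \<in> {1..n}" "?v \<in> {1..n}" "?w \<in> {1..n}" "?u \<noteq> ?v" "?u \<noteq> ?w" "?v \<noteq> ?w"
    using \<sigma> pinned_strict_mono[OF \<open>m \<le> 3\<close> assms(2)] unfolding Sn_3 by auto
  moreover have "{\<pi> \<in> Sn n. contains \<pi> p} =
      {xs \<in> permutations_of_set {1..n}. occurs3_gap_empty ?u ?v ?w x xs}"
    using contains_pinned_values_iff[OF \<sigma> \<open>m \<le> 3\<close> \<open>x \<le> 3\<close> _ assms(2)] unfolding p Sn_def by blast
  ultimately show ?thesis using card_occurs3_gap_empty[of "{1..n}" ?u ?v ?w x] \<open>x \<le> 3\<close> by simp
qed

lemma card_contains_pinned_position_pattern:
  assumes "p \<in> pinned_position_patterns" "3 \<le> n"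
  shows "2 * card {\<pi> \<in> Sn n. contains \<pi> p} = fact (n - 1)"
proof -
  obtain \<sigma> x m where p: "p = (\<sigma>, {..3} - {m}, {x})" and \<sigma>: "\<sigma> \<in> Sn 3" and "x \<le> 3" "m \<le> 3"
    using assms(1) unfolding pinned_position_patterns_def by blast
  let ?q = "(inv_list \<sigma>, {x}, {..3} - {m})"
  have "p = pat_inv ?q" unfolding p pat_inv_def using inv_list_inv_list[OF \<sigma>] by simp
  moreover have "?q \<in> pinned_value_patterns"
    using pinned_value_patternsI[OF inv_list_Sn[OF \<sigma>]] \<open>x \<le> 3\<close> \<open>m \<le> 3\<close> by blast
  ultimately show ?thesis
    using card_contains_pat_inv[OF inv_list_Sn[OF \<sigma>], of "{x}" "{..3} - {m}"] \<open>x \<le> 3\<close>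
      card_contains_pinned_value_pattern assms(2) by auto
qed

lemma card_contains_pinned_pattern:
  assumes "p \<in> pinned_patterns" "3 \<le> n"
  shows "2 * card {\<pi> \<in> Sn n. contains \<pi> p} = fact (n - 1)"
  using assms card_contains_pinned_value_pattern card_contains_pinned_position_pattern
  unfolding pinned_patterns_def by blast

lemma reflect_gap_complement:
  assumes "m \<le> (3::nat)"
  shows "(\<lambda>y. 3 - y) ` ({..3} - {m}) = {..3} - {3 - m}"
proof
  show "{..3} - {3 - m} \<subseteq> (\<lambda>y. 3 - y) ` ({..3} - {m})"
  proof
    fix y assume "y \<in> {..3} - {3 - m}"
    then have "3 - y \<in> {..3} - {m}" and "y = 3 - (3 - y)" using assms by auto
    then show "y \<in> (\<lambda>y. 3 - y) ` ({..3} - {m})" by blast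
  qed
qed (use assms in auto)

lemma Sn3_rev_comp:
  assumes "\<sigma> \<in> Sn 3"
  shows "rev \<sigma> \<in> Sn 3" "map (\<lambda>v. length \<sigma> + 1 - v) \<sigma> \<in> Sn 3"
  using assms unfolding Sn_3 by auto

lemma pinned_patterns_closed:
  assumes "q \<in> pinned_patterns"
  shows "pat_inv q \<in> pinned_patterns"
    "pat_rev q \<in> pinned_patterns"
    "pat_comp q \<in> pinned_patterns"
proof -
  obtain \<sigma> x m where \<sigma>: "\<sigma> \<in> Sn 3" and xm: "x \<le> 3" "m \<le> 3"
    and q: "q = (\<sigma>, {x}, {..3} - {m}) \<or> q = (\<sigma>, {..3} - {m}, {x})"
    using assms unfolding pinned_patterns_def pinned_value_patterns_def pinned_position_patterns_def
    by blast
  have len: "length \<sigma> = 3" using Sn_length[OF \<sigma>] .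
  note Sn3 = inv_list_Sn[OF \<sigma>] Sn3_rev_comp[OF \<sigma>]
  have "3 - x \<le> 3" "3 - m \<le> 3" by auto
  with q show "pat_inv q \<in> pinned_patterns"
    "pat_rev q \<in> pinned_patterns"
    "pat_comp q \<in> pinned_patterns"
    unfolding pat_inv_def pat_rev_def pat_comp_def pinned_patterns_def
    using pinned_value_patternsI[OF Sn3(1) xm] pinned_position_patternsI[OF Sn3(1) xm]
      pinned_value_patternsI[OF Sn3(2) _ xm(2)] pinned_position_patternsI[OF Sn3(2) xm(1)]
      pinned_value_patternsI[OF Sn3(3) xm(1)] pinned_position_patternsI[OF Sn3(3) _ xm(2)]
    by (auto simp: len reflect_gap_complement[OF xm(2)])
qed

lemma sym_class_pinned_patterns:
  assumes "p \<in> sym_class q" "q \<in> pinned_patterns"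
  shows "p \<in> pinned_patterns"
  using assms by induction (simp_all add: pinned_patterns_closed)

lemma base_patterns_pinned: "base_patterns \<subseteq> pinned_patterns"
proof -
  have gaps: "{0, 1, 2} = {..3} - {3::nat}" "{0, 1, 3} = {..3} - {2::nat}"
    "{0, 2, 3} = {..3} - {1::nat}" "{1, 2, 3} = {..3} - {0::nat}"
    by auto
  have "[1, 2, 3] \<in> Sn 3" "[1, 3, 2] \<in> Sn 3" unfolding Sn_3 by simp_all
  then show ?thesis
    unfolding base_patterns_def gaps pinned_patterns_def
    by (auto intro: pinned_value_patternsI pinned_position_patternsI)
qed

lemma avoid_count_eq: "real (avoid_count n p) = fact n - real (card {\<pi> \<in> Sn n. contains \<pi> p})"
proof -
  let ?C = "{\<pi> \<in> Sn n. contains \<pi> p}"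
  have "finite (Sn n)" "card (Sn n) = fact n" by (simp_all add: Sn_def)
  moreover have "{\<pi> \<in> Sn n. \<not> contains \<pi> p} = Sn n - ?C" by blast
  moreover have "card ?C \<le> card (Sn n)" using calculation(1) by (intro card_mono) auto
  ultimately show ?thesis
    unfolding avoid_count_def by (simp add: card_Diff_subset of_nat_diff)
qed

theorem mainTheorem18:
  fixes p :: bvpat and n :: nat
  assumes "p \<in> (\<Union>q\<in>base_patterns. sym_class q)"
    and "n \<ge> 3"
  shows "real (avoid_count n p) = fact n - fact (n - 1) / 2"
proof -
  obtain q where "q \<in> base_patterns" "p \<in> sym_class q" using assms(1) by blast
  then have "p \<in> pinned_patterns"
    using sym_class_pinned_patterns base_patterns_pinned by blast
  then have "2 * card {\<pi> \<in> Sn n. contains \<pi> p} = fact (n - 1)"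
    using card_contains_pinned_pattern assms(2) by blast
  then have "real (card {\<pi> \<in> Sn n. contains \<pi> p}) = fact (n - 1) / 2"
    by (metis nonzero_mult_div_cancel_left of_nat_fact of_nat_mult of_nat_numeral zero_neq_numeral)
  then show ?thesis using avoid_count_eq by simp
qed

end
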